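(* Let $\alpha : I \to \mathbb{E}^4$ be an arclength parameterized curve (defined on an open interval $I$) with non-zero curvatures $\kappa_1,\kappa_2,\kappa_3$. Suppose two of its curvatures are constant. Then $\alpha$ is congruent to a rectifying curve if and only if one of the following holds: (i) $\kappa_1(s)=\kappa_1$, $\kappa_2(s)=\kappa_2$ are constants and $\kappa_3(s)=\pm \dfrac{1}{\sqrt{-s^2-2cs+c_1}}$ for some $\kappa_1,\kappa_2\in\mathbb{R}$ with $\kappa_1,\kappa_2>0$ and some $c,c_1\in\mathbb{R}$, where $-s^2-2cs+c_1>0$; (ii) $\kappa_2(s)=\kappa_2$, $\kappa_3(s)=\kappa_3$ are constants and $\kappa_1(s)=c_1\dfrac{\sin(\kappa_3 s+c_2)}{s+c}$ for some $\kappa_2>0$, $\kappa_3\in\mathbb{R}\setminus\{0\}$, $c,c_2\in\mathbb{R}$ and $c_1\in\mathbb{R}\setminus\{0\}$; (iii) $\kappa_1(s)=\kappa_1$, $\kappa_3(s)=\kappa_3$ are constants and $\kappa_2(s)=c_2(s+c)\sec(\kappa_3 s+c_1)$ for some $\kappa_1>0$, $\kappa_3\in\mathbb{R}\setminus\{0\}$, $c,c_1\in\mathbb{R}$ and $c_2\in\mathbb{R}\setminus\{0\}$.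
   Context: For an arclength parameterized curve $\alpha$ in $\mathbb{E}^4$ (sufficiently differentiable) one has the Frenet frame $T,N,B_1,B_2$ (orthonormal) with curvatures $\kappa_1,\kappa_2,\kappa_3$ satisfying $T'=\kappa_1 N$, $N'=-\kappa_1 T+\kappa_2 B_1$, $B_1'=-\kappa_2 N+\kappa_3 B_2$, $B_2'=-\kappa_3 B_1$, where $\kappa_1,\kappa_2>0$. "Non-zero curvatures" means no curvature is identically zero. A curve $\alpha$ is a rectifying curve if there is a fixed point $p$ such that for all $s$, $\langle \alpha(s)-p, N(s)\rangle = 0$, i.e. the orthogonal complement of $N(s)$ (through $\alpha(s)$) contains $p$. *)

theory Defs
  imports "HOL-Analysis.Analysis"
begin

definition frenet_curve_E4 ::
  "real set \<Rightarrow> (real \<Rightarrow> real^4) \<Rightarrow> (real \<Rightarrow> real^4) \<Rightarrow> (real \<Rightarrow> real^4) \<Rightarrow>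
   (real \<Rightarrow> real^4) \<Rightarrow> (real \<Rightarrow> real^4) \<Rightarrow>
   (real \<Rightarrow> real) \<Rightarrow> (real \<Rightarrow> real) \<Rightarrow> (real \<Rightarrow> real) \<Rightarrow> bool" where
  "frenet_curve_E4 I \<alpha> T N B1 B2 k1 k2 k3 \<longleftrightarrow>
     (\<forall>s\<in>I.
        (\<alpha> has_vector_derivative T s) (at s) \<and>
        (T has_vector_derivative (k1 s *\<^sub>R N s)) (at s) \<and>
        (N has_vector_derivative (- k1 s *\<^sub>R T s + k2 s *\<^sub>R B1 s)) (at s) \<and>
        (B1 has_vector_derivative (- k2 s *\<^sub>R N s + k3 s *\<^sub>R B2 s)) (at s) \<and>
        (B2 has_vector_derivative (- k3 s *\<^sub>R B1 s)) (at s) \<and>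
        norm (T s) = 1 \<and> norm (N s) = 1 \<and> norm (B1 s) = 1 \<and> norm (B2 s) = 1 \<and>
        T s \<bullet> N s = 0 \<and> T s \<bullet> B1 s = 0 \<and> T s \<bullet> B2 s = 0 \<and>
        N s \<bullet> B1 s = 0 \<and> N s \<bullet> B2 s = 0 \<and> B1 s \<bullet> B2 s = 0 \<and>
        k1 s > 0 \<and> k2 s > 0)"

definition unit_tangent :: "(real \<Rightarrow> 'a::real_normed_vector) \<Rightarrow> real \<Rightarrow> 'a" where
  "unit_tangent \<beta> s = (let v = vector_derivative \<beta> (at s) in v /\<^sub>R norm v)"

definition principal_normal :: "(real \<Rightarrow> 'a::real_normed_vector) \<Rightarrow> real \<Rightarrow> 'a" where
  "principal_normal \<beta> s = (let w = vector_derivative (unit_tangent \<beta>) (at s) in w /\<^sub>R norm w)"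

text \<open>Rectifying curve: some fixed point p lies in the rectifying space through beta(s)
  (the orthogonal complement of N(s)) for all s.\<close>
definition rectifying_curve :: "real set \<Rightarrow> (real \<Rightarrow> 'a::real_inner) \<Rightarrow> bool" where
  "rectifying_curve I \<beta> \<longleftrightarrow> (\<exists>p. \<forall>s\<in>I. (\<beta> s - p) \<bullet> principal_normal \<beta> s = 0)"

definition congruent_to_rectifying :: "real set \<Rightarrow> (real \<Rightarrow> 'a::real_inner) \<Rightarrow> bool" where
  "congruent_to_rectifying I \<alpha> \<longleftrightarrow>
     (\<exists>(A :: 'a \<Rightarrow> 'a) b. orthogonal_transformation A \<and> rectifying_curve I (\<lambda>s. A (\<alpha> s) + b))"

end

theory Submission
  imports Defs
begin

text \<open>
  If \<open>p\<close> is a point with \<open>\<langle>\<alpha> - p, N\<rangle> = 0\<close>, write \<open>\<alpha> - p = \<lambda> T + \<mu> B1 + \<nu> B2\<close>.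
  Differentiating with the Frenet equations gives \<open>\<lambda>' = 1\<close>, i.e. \<open>\<lambda> = s + c\<close>, together with
  \<open>\<mu>' = \<kappa>3 \<nu>\<close>, \<open>\<nu>' = -\<kappa>3 \<mu>\<close> and \<open>\<kappa>2 \<mu> = \<kappa>1 (s + c)\<close>; conversely, for any such \<open>\<mu>, \<nu>\<close>
  the curve \<open>\<alpha> - (s + c) T - \<mu> B1 - \<nu> B2\<close> has derivative zero, so it is a fixed point \<open>p\<close>.
  A rigid motion carries the principal normal along with the curve.

  With \<open>\<kappa>1, \<kappa>2\<close> constant, \<open>\<mu>\<close> is linear and \<open>\<nu>\<^sup>2 + (\<kappa>1 / \<kappa>2)\<^sup>2 (s\<^sup>2 + 2 c s)\<close> is a first integral,
  which pins down \<open>\<kappa>3 = \<plusminus>1 / sqrt (c1 - 2 c s - s\<^sup>2)\<close>. With \<open>\<kappa>3\<close> constant, \<open>(\<mu>, \<nu>)\<close> rotates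
  with angular speed \<open>\<kappa>3\<close>, so \<open>\<mu> = A sin (\<kappa>3 s + t)\<close>, and \<open>\<kappa>2 \<mu> = \<kappa>1 (s + c)\<close> is the
  stated formula for \<open>\<kappa>1\<close> or \<open>\<kappa>2\<close>.
\<close>

lemma has_vector_derivative_inner:
  fixes f g :: "real \<Rightarrow> 'a::real_inner"
  assumes "(f has_vector_derivative f') (at x)" "(g has_vector_derivative g') (at x)"
  shows "((\<lambda>x. f x \<bullet> g x) has_real_derivative f' \<bullet> g x + f x \<bullet> g') (at x)"
proof -
  have "((\<lambda>x. f x \<bullet> g x) has_derivative (\<lambda>h. f x \<bullet> (h *\<^sub>R g') + (h *\<^sub>R f') \<bullet> g x)) (at x)"
    using assms unfolding has_vector_derivative_def by (intro derivative_eq_intros) auto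
  then show ?thesis unfolding has_field_derivative_def
    by (rule has_derivative_eq_rhs) (auto simp: algebra_simps fun_eq_iff)
qed

lemma continuous_on_zero_off_point:
  fixes g :: "'a::{perfect_space, metric_space} \<Rightarrow> 'b::real_normed_vector"
  assumes "open S" "continuous_on S g" "x \<in> S" "\<And>y. y \<in> S \<Longrightarrow> y \<noteq> x \<Longrightarrow> g y = 0"
  shows "g x = 0"
proof -
  have "isCont g x"
    using assms(1-3) continuous_on_eq_continuous_at by blast
  then have "(g \<longlongrightarrow> g x) (at x)" by (simp add: isCont_def)
  moreover have "eventually (\<lambda>y. y \<in> S) (at x)"
    using assms(1,3) eventually_at_topological by blast
  then have "eventually (\<lambda>y. g y = 0) (at x)"
    unfolding eventually_at_filter using assms(4) by (auto elim!: eventually_mono)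
  then have "(g \<longlongrightarrow> 0) (at x)" by (simp add: tendsto_eventually)
  ultimately show ?thesis using tendsto_unique trivial_limit_at by blast
qed

lemma open_nonempty_obtains_other:
  fixes S :: "'a::perfect_space set"
  assumes "open S" "S \<noteq> {}"
  obtains y where "y \<in> S" "y \<noteq> x"
proof -
  have "S \<noteq> {x}" using assms(1) not_open_singleton by auto
  then show thesis using assms(2) that by blast
qed

lemma continuous_nonvanishing_sign_constant:
  fixes f :: "real \<Rightarrow> real"
  assumes "is_interval I" "continuous_on I f" "\<forall>s\<in>I. f s \<noteq> 0"
  obtains \<sigma> :: real where "\<sigma> = 1 \<or> \<sigma> = -1" "\<forall>s\<in>I. f s = \<sigma> * \<bar>f s\<bar>"
proof -
  have "is_interval (f ` I)"
    using assms(1,2) connected_continuous_image is_interval_connected is_interval_connected_1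
    by blast
  have "(\<forall>s\<in>I. f s > 0) \<or> (\<forall>s\<in>I. f s < 0)"
  proof (rule ccontr)
    assume "\<not> ?thesis"
    then obtain x y where xy: "x \<in> I" "y \<in> I" "\<not> f x > 0" "\<not> f y < 0" by blast
    then have "f x < 0" "f y > 0" using assms(3) by force+
    moreover have "f x \<in> f ` I" "f y \<in> f ` I" using xy by auto
    ultimately have "0 \<in> f ` I"
      using \<open>is_interval (f ` I)\<close> unfolding is_interval_1 by (meson less_imp_le)
    then show False using assms(3) by auto
  qed
  then show thesis
  proof
    assume "\<forall>s\<in>I. f s > 0"
    then show thesis by (intro that[of 1]) auto
  next
    assume "\<forall>s\<in>I. f s < 0"
    then show thesis by (intro that[of "-1"]) auto
  qed
qed

lemma real_polar_form: "\<exists>A t. U = A * sin t \<and> V = A * cos t" for U V :: real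
proof -
  define z where "z = Complex V U"
  have "V = Re (rcis (cmod z) (Arg z))" "U = Im (rcis (cmod z) (Arg z))"
    by (simp_all only: rcis_cmod_Arg z_def complex.sel)
  then show ?thesis
    by (intro exI[of _ "cmod z"] exI[of _ "Arg z"]) (simp only: Re_rcis Im_rcis)
qed

lemma harmonic_system_solution:
  fixes \<mu> \<nu> :: "real \<Rightarrow> real"
  assumes "convex I"
    and \<mu>': "\<And>s. s \<in> I \<Longrightarrow> (\<mu> has_real_derivative d * \<nu> s) (at s)"
    and \<nu>': "\<And>s. s \<in> I \<Longrightarrow> (\<nu> has_real_derivative - d * \<mu> s) (at s)"
  obtains A t where "\<And>s. s \<in> I \<Longrightarrow> \<mu> s = A * sin (d * s + t)"
proof -
  \<comment> \<open>\<open>(\<mu>, \<nu>)\<close> turns by the angle \<open>-d s\<close>; \<open>(u, v)\<close> undoes this rotation\<close>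
  define u where "u s = \<mu> s * cos (d * s) - \<nu> s * sin (d * s)" for s
  define v where "v s = \<mu> s * sin (d * s) + \<nu> s * cos (d * s)" for s
  have "\<exists>U. \<forall>s\<in>I. u s = U"
  proof (rule has_field_derivative_zero_constant[OF assms(1)])
    fix s assume "s \<in> I"
    then have "(u has_real_derivative 0) (at s)" unfolding u_def[abs_def]
      using \<mu>' \<nu>' by (auto intro!: derivative_eq_intros simp: algebra_simps)
    then show "(u has_real_derivative 0) (at s within I)" by (rule has_field_derivative_at_within)
  qed
  moreover have "\<exists>V. \<forall>s\<in>I. v s = V"
  proof (rule has_field_derivative_zero_constant[OF assms(1)])
    fix s assume "s \<in> I"
    then have "(v has_real_derivative 0) (at s)" unfolding v_def[abs_def]
      using \<mu>' \<nu>' by (auto intro!: derivative_eq_intros simp: algebra_simps)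
    then show "(v has_real_derivative 0) (at s within I)" by (rule has_field_derivative_at_within)
  qed
  ultimately obtain U V where U: "\<And>s. s \<in> I \<Longrightarrow> u s = U" and V: "\<And>s. s \<in> I \<Longrightarrow> v s = V"
    by blast
  obtain A t where At: "U = A * sin t" "V = A * cos t" using real_polar_form by blast
  have "\<mu> s = A * sin (d * s + t)" if "s \<in> I" for s
  proof -
    have "\<mu> s = \<mu> s * ((sin (d * s))\<^sup>2 + (cos (d * s))\<^sup>2)" by simp
    also have "\<dots> = u s * cos (d * s) + v s * sin (d * s)"
      unfolding u_def v_def power2_eq_square by algebra
    also have "\<dots> = A * sin (d * s + t)"
      using U[OF that] V[OF that] At by (simp add: sin_add algebra_simps)
    finally show ?thesis .
  qed
  then show thesis by (rule that)
qed

lemma frenet_curve_E4_at: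
  assumes "frenet_curve_E4 I \<alpha> T N B1 B2 k1 k2 k3" "s \<in> I"
  shows "(\<alpha> has_vector_derivative T s) (at s) \<and>
        (T has_vector_derivative (k1 s *\<^sub>R N s)) (at s) \<and>
        (N has_vector_derivative (- k1 s *\<^sub>R T s + k2 s *\<^sub>R B1 s)) (at s) \<and>
        (B1 has_vector_derivative (- k2 s *\<^sub>R N s + k3 s *\<^sub>R B2 s)) (at s) \<and>
        (B2 has_vector_derivative (- k3 s *\<^sub>R B1 s)) (at s) \<and>
        norm (T s) = 1 \<and> norm (N s) = 1 \<and> norm (B1 s) = 1 \<and> norm (B2 s) = 1 \<and>
        T s \<bullet> N s = 0 \<and> T s \<bullet> B1 s = 0 \<and> T s \<bullet> B2 s = 0 \<and>
        N s \<bullet> B1 s = 0 \<and> N s \<bullet> B2 s = 0 \<and> B1 s \<bullet> B2 s = 0 \<and>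
        k1 s > 0 \<and> k2 s > 0"
  using assms unfolding frenet_curve_E4_def by blast

lemma principal_normal_rigid_motion:
  fixes A :: "real^4 \<Rightarrow> real^4"
  assumes fr: "frenet_curve_E4 I \<alpha> T N B1 B2 k1 k2 k3" and I: "open I" and s: "s \<in> I"
    and A: "orthogonal_transformation A"
  shows "principal_normal (\<lambda>s. A (\<alpha> s) + b) s = A (N s)"
proof -
  have lin: "linear A" using A by (rule orthogonal_transformation_linear)
  then have bl: "bounded_linear A" by (simp add: linear_conv_bounded_linear)
  have norm_A: "\<And>x. norm (A x) = norm x" using A by (simp add: orthogonal_transformation_norm)
  have tangent: "unit_tangent (\<lambda>s. A (\<alpha> s) + b) t = A (T t)" if t: "t \<in> I" for t
  proof -
    have "((\<lambda>s. A (\<alpha> s) + b) has_vector_derivative A (T t)) (at t)"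
      using bounded_linear.has_vector_derivative[OF bl] frenet_curve_E4_at[OF fr t]
      by (auto intro!: derivative_eq_intros)
    then have "vector_derivative (\<lambda>s. A (\<alpha> s) + b) (at t) = A (T t)"
      by (rule vector_derivative_at)
    then show ?thesis
      unfolding unit_tangent_def Let_def using norm_A frenet_curve_E4_at[OF fr t] by simp
  qed
  have T': "(T has_vector_derivative k1 s *\<^sub>R N s) (at s)"
    using frenet_curve_E4_at[OF fr s] by blast
  have "((\<lambda>s. A (T s)) has_vector_derivative k1 s *\<^sub>R A (N s)) (at s)"
    using bounded_linear.has_vector_derivative[OF bl T'] by (simp add: linear_scale[OF lin])
  then have "(unit_tangent (\<lambda>s. A (\<alpha> s) + b) has_vector_derivative k1 s *\<^sub>R A (N s)) (at s)"
    by (rule has_vector_derivative_transform_within_open[OF _ I s]) (simp add: tangent)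
  then have "vector_derivative (unit_tangent (\<lambda>s. A (\<alpha> s) + b)) (at s) = k1 s *\<^sub>R A (N s)"
    by (rule vector_derivative_at)
  then show ?thesis
    unfolding principal_normal_def Let_def using norm_A frenet_curve_E4_at[OF fr s] by simp
qed

lemma congruent_to_rectifying_iff_normal_orthogonal:
  fixes \<alpha> :: "real \<Rightarrow> real^4"
  assumes fr: "frenet_curve_E4 I \<alpha> T N B1 B2 k1 k2 k3" and I: "open I"
  shows "congruent_to_rectifying I \<alpha> \<longleftrightarrow> (\<exists>q. \<forall>s\<in>I. (\<alpha> s - q) \<bullet> N s = 0)"
proof
  assume "congruent_to_rectifying I \<alpha>"
  then obtain A b p where A: "orthogonal_transformation (A :: real^4 \<Rightarrow> real^4)"
    and rect: "\<forall>s\<in>I. (A (\<alpha> s) + b - p) \<bullet> principal_normal (\<lambda>s. A (\<alpha> s) + b) s = 0"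
    unfolding congruent_to_rectifying_def rectifying_curve_def by blast
  obtain q where q: "A q = p - b"
    using orthogonal_transformation_surj[OF A] by (metis surjD)
  have "(\<alpha> s - q) \<bullet> N s = 0" if s: "s \<in> I" for s
  proof -
    have "A (\<alpha> s) + b - p = A (\<alpha> s - q)"
      using A by (simp add: orthogonal_transformation_linear linear_diff q algebra_simps)
    then have "A (\<alpha> s - q) \<bullet> A (N s) = 0"
      using rect s principal_normal_rigid_motion[OF fr I s A] by auto
    then show ?thesis using A by (simp add: orthogonal_transformation_def)
  qed
  then show "\<exists>q. \<forall>s\<in>I. (\<alpha> s - q) \<bullet> N s = 0" by blast
next
  assume "\<exists>q. \<forall>s\<in>I. (\<alpha> s - q) \<bullet> N s = 0"
  then have "rectifying_curve I (\<lambda>s. id (\<alpha> s) + 0)"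
    unfolding rectifying_curve_def
    using principal_normal_rigid_motion[OF fr I _ orthogonal_transformation_id, of _ 0] by auto
  moreover have "orthogonal_transformation (id :: real^4 \<Rightarrow> real^4)"
    unfolding id_def by (rule orthogonal_transformation_id)
  ultimately show "congruent_to_rectifying I \<alpha>"
    unfolding congruent_to_rectifying_def by blast
qed

text \<open>\<open>\<mu>\<close> and \<open>\<nu>\<close> are the \<open>B1\<close>- and \<open>B2\<close>-coordinates of \<open>\<alpha> - p\<close>,
  whose \<open>T\<close>-coordinate is \<open>s + c\<close>.\<close>

definition rectifying_ode ::
  "real set \<Rightarrow> (real \<Rightarrow> real) \<Rightarrow> (real \<Rightarrow> real) \<Rightarrow> (real \<Rightarrow> real) \<Rightarrow> bool" where
  "rectifying_ode I k1 k2 k3 \<longleftrightarrow> (\<exists>c \<mu> \<nu>. \<forall>s\<in>I.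
     (\<mu> has_real_derivative k3 s * \<nu> s) (at s) \<and> (\<nu> has_real_derivative - k3 s * \<mu> s) (at s) \<and>
     k2 s * \<mu> s = k1 s * (s + c))"

lemma rectifying_odeI:
  assumes "\<And>s. s \<in> I \<Longrightarrow> (\<mu> has_real_derivative k3 s * \<nu> s) (at s)"
    and "\<And>s. s \<in> I \<Longrightarrow> (\<nu> has_real_derivative - k3 s * \<mu> s) (at s)"
    and "\<And>s. s \<in> I \<Longrightarrow> k2 s * \<mu> s = k1 s * (s + c)"
  shows "rectifying_ode I k1 k2 k3"
  using assms unfolding rectifying_ode_def by blast

lemma frenet_coordinate_derivative:
  fixes \<alpha> :: "real \<Rightarrow> real^4"
  assumes fr: "frenet_curve_E4 I \<alpha> T N B1 B2 k1 k2 k3" and "s \<in> I"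
    and "(X has_vector_derivative X') (at s)"
  shows "((\<lambda>s. (\<alpha> s - q) \<bullet> X s) has_real_derivative T s \<bullet> X s + (\<alpha> s - q) \<bullet> X') (at s)"
  using frenet_curve_E4_at[OF assms(1,2)] assms(3)
  by (intro has_vector_derivative_inner) (auto intro!: derivative_eq_intros)

lemma normal_orthogonal_tangent_component:
  fixes \<alpha> :: "real \<Rightarrow> real^4"
  assumes fr: "frenet_curve_E4 I \<alpha> T N B1 B2 k1 k2 k3" and I: "is_interval I"
    and q: "\<forall>s\<in>I. (\<alpha> s - q) \<bullet> N s = 0"
  obtains c where "\<And>s. s \<in> I \<Longrightarrow> (\<alpha> s - q) \<bullet> T s = s + c"
proof -
  have T_component_deriv: "((\<lambda>s. (\<alpha> s - q) \<bullet> T s) has_real_derivative 1) (at s)" if s: "s \<in> I" for s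
  proof -
    have "((\<lambda>s. (\<alpha> s - q) \<bullet> T s) has_real_derivative T s \<bullet> T s + (\<alpha> s - q) \<bullet> (k1 s *\<^sub>R N s)) (at s)"
      using frenet_curve_E4_at[OF fr s] by (intro frenet_coordinate_derivative[OF fr s]) blast
    then show ?thesis using frenet_curve_E4_at[OF fr s] q s by (simp add: dot_square_norm)
  qed
  have "\<exists>c. \<forall>s\<in>I. (\<alpha> s - q) \<bullet> T s - s = c"
  proof (rule has_field_derivative_zero_constant[OF is_interval_convex[OF I]])
    fix s assume "s \<in> I"
    then have "((\<lambda>s. (\<alpha> s - q) \<bullet> T s - s) has_real_derivative 1 - 1) (at s)"
      by (intro DERIV_diff T_component_deriv DERIV_ident)
    then show "((\<lambda>s. (\<alpha> s - q) \<bullet> T s - s) has_real_derivative 0) (at s within I)"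
      by (simp add: has_field_derivative_at_within)
  qed
  then show thesis using that by (metis add.commute diff_add_cancel)
qed

lemma normal_orthogonal_imp_rectifying_ode:
  fixes \<alpha> :: "real \<Rightarrow> real^4"
  assumes fr: "frenet_curve_E4 I \<alpha> T N B1 B2 k1 k2 k3" and I: "open I" "is_interval I"
    and q: "\<forall>s\<in>I. (\<alpha> s - q) \<bullet> N s = 0"
  shows "rectifying_ode I k1 k2 k3"
proof -
  obtain c where T_component: "\<And>s. s \<in> I \<Longrightarrow> (\<alpha> s - q) \<bullet> T s = s + c"
    using normal_orthogonal_tangent_component[OF fr I(2) q] by blast
  define \<mu> where "\<mu> s = (\<alpha> s - q) \<bullet> B1 s" for s
  define \<nu> where "\<nu> s = (\<alpha> s - q) \<bullet> B2 s" for s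
  show ?thesis
  proof (rule rectifying_odeI[where \<mu> = \<mu> and \<nu> = \<nu> and c = c])
    fix s assume s: "s \<in> I"
    note frenet = frenet_curve_E4_at[OF fr s]
    have "((\<lambda>s. (\<alpha> s - q) \<bullet> N s) has_real_derivative
        T s \<bullet> N s + (\<alpha> s - q) \<bullet> (- k1 s *\<^sub>R T s + k2 s *\<^sub>R B1 s)) (at s)"
      using frenet by (intro frenet_coordinate_derivative[OF fr s]) blast
    moreover have "((\<lambda>s. (\<alpha> s - q) \<bullet> N s) has_real_derivative 0) (at s)"
    proof (rule has_field_derivative_transform_within_open[OF _ I(1) s])
      show "((\<lambda>_. 0) has_real_derivative 0) (at s)" by simp
    qed (use q in simp)
    ultimately have "T s \<bullet> N s + (\<alpha> s - q) \<bullet> (- k1 s *\<^sub>R T s + k2 s *\<^sub>R B1 s) = 0"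
      by (rule DERIV_unique)
    then show "k2 s * \<mu> s = k1 s * (s + c)"
      using T_component[OF s] frenet by (simp add: \<mu>_def inner_add_right inner_diff_right)
    have "((\<lambda>s. (\<alpha> s - q) \<bullet> B1 s) has_real_derivative
        T s \<bullet> B1 s + (\<alpha> s - q) \<bullet> (- k2 s *\<^sub>R N s + k3 s *\<^sub>R B2 s)) (at s)"
      using frenet by (intro frenet_coordinate_derivative[OF fr s]) blast
    moreover have "T s \<bullet> B1 s + (\<alpha> s - q) \<bullet> (- k2 s *\<^sub>R N s + k3 s *\<^sub>R B2 s) = k3 s * \<nu> s"
      using frenet q s by (simp add: \<nu>_def inner_add_right inner_diff_right)
    ultimately show "(\<mu> has_real_derivative k3 s * \<nu> s) (at s)"
      by (simp add: \<mu>_def[abs_def])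
    have "((\<lambda>s. (\<alpha> s - q) \<bullet> B2 s) has_real_derivative
        T s \<bullet> B2 s + (\<alpha> s - q) \<bullet> (- k3 s *\<^sub>R B1 s)) (at s)"
      using frenet by (intro frenet_coordinate_derivative[OF fr s]) blast
    moreover have "T s \<bullet> B2 s + (\<alpha> s - q) \<bullet> (- k3 s *\<^sub>R B1 s) = - k3 s * \<mu> s"
      using frenet by (simp add: \<mu>_def)
    ultimately show "(\<nu> has_real_derivative - k3 s * \<mu> s) (at s)"
      by (simp add: \<nu>_def[abs_def])
  qed
qed

lemma rectifying_ode_imp_normal_orthogonal:
  fixes \<alpha> :: "real \<Rightarrow> real^4"
  assumes fr: "frenet_curve_E4 I \<alpha> T N B1 B2 k1 k2 k3" and I: "is_interval I"
    and "rectifying_ode I k1 k2 k3"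
  shows "\<exists>q. \<forall>s\<in>I. (\<alpha> s - q) \<bullet> N s = 0"
proof -
  obtain \<mu> \<nu> c where \<mu>': "\<And>s. s \<in> I \<Longrightarrow> (\<mu> has_real_derivative k3 s * \<nu> s) (at s)"
    and \<nu>': "\<And>s. s \<in> I \<Longrightarrow> (\<nu> has_real_derivative - k3 s * \<mu> s) (at s)"
    and rel: "\<And>s. s \<in> I \<Longrightarrow> k2 s * \<mu> s = k1 s * (s + c)"
    using assms(3) unfolding rectifying_ode_def by blast
  define p where "p s = \<alpha> s - (s + c) *\<^sub>R T s - \<mu> s *\<^sub>R B1 s - \<nu> s *\<^sub>R B2 s" for s
  have "(p has_vector_derivative (k2 s * \<mu> s - k1 s * (s + c)) *\<^sub>R N s) (at s)"
    if s: "s \<in> I" for s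
    using frenet_curve_E4_at[OF fr s] \<mu>'[OF s] \<nu>'[OF s] unfolding p_def[abs_def]
    by (auto intro!: derivative_eq_intros simp: algebra_simps)
  then have "(p has_vector_derivative 0) (at s)" if "s \<in> I" for s
    using rel that by simp
  then have "\<exists>q. \<forall>s\<in>I. p s = q"
    by (intro has_derivative_zero_constant[OF is_interval_convex[OF I]])
      (auto simp: has_vector_derivative_def intro: has_derivative_at_withinI)
  then obtain q where q: "\<And>s. s \<in> I \<Longrightarrow> p s = q" by blast
  have "(\<alpha> s - q) \<bullet> N s = 0" if s: "s \<in> I" for s
  proof -
    have "\<alpha> s - q = (s + c) *\<^sub>R T s + \<mu> s *\<^sub>R B1 s + \<nu> s *\<^sub>R B2 s"
      using q[OF s] unfolding p_def by (simp add: algebra_simps)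
    moreover have "T s \<bullet> N s = 0" "B1 s \<bullet> N s = 0" "B2 s \<bullet> N s = 0"
      using frenet_curve_E4_at[OF fr s] by (simp_all add: inner_commute)
    ultimately show ?thesis by (simp add: inner_add_left)
  qed
  then show ?thesis by blast
qed

lemma congruent_to_rectifying_iff_rectifying_ode:
  fixes \<alpha> :: "real \<Rightarrow> real^4"
  assumes fr: "frenet_curve_E4 I \<alpha> T N B1 B2 k1 k2 k3" and I: "open I" "is_interval I"
  shows "congruent_to_rectifying I \<alpha> \<longleftrightarrow> rectifying_ode I k1 k2 k3"
  using congruent_to_rectifying_iff_normal_orthogonal[OF fr I(1)]
    normal_orthogonal_imp_rectifying_ode[OF fr I] rectifying_ode_imp_normal_orthogonal[OF fr I(2)]
  by blast

lemma rectifying_ode_const_k1_k2_first_integral: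
  assumes I: "open I" "is_interval I"
    and k1: "\<forall>s\<in>I. k1 s = \<kappa>1" and k2: "\<forall>s\<in>I. k2 s = \<kappa>2" and "\<kappa>1 \<noteq> 0" "\<kappa>2 \<noteq> 0"
    and ode: "rectifying_ode I k1 k2 k3"
  obtains c c1 where "\<And>s. s \<in> I \<Longrightarrow> (k3 s)\<^sup>2 * (c1 - 2 * c * s - s\<^sup>2) = 1"
proof -
  obtain \<mu> \<nu> c where \<mu>': "\<And>s. s \<in> I \<Longrightarrow> (\<mu> has_real_derivative k3 s * \<nu> s) (at s)"
    and \<nu>': "\<And>s. s \<in> I \<Longrightarrow> (\<nu> has_real_derivative - k3 s * \<mu> s) (at s)"
    and rel: "\<And>s. s \<in> I \<Longrightarrow> k2 s * \<mu> s = k1 s * (s + c)"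
    using ode unfolding rectifying_ode_def by blast
  define m where "m = \<kappa>1 / \<kappa>2"
  have "m \<noteq> 0" using assms(5,6) by (simp add: m_def)
  have \<mu>: "\<mu> s = m * (s + c)" if "s \<in> I" for s
    using rel[OF that] k1 k2 that \<open>\<kappa>2 \<noteq> 0\<close> by (simp add: m_def field_simps)
  have k3\<nu>: "k3 s * \<nu> s = m" if s: "s \<in> I" for s
  proof -
    have "((\<lambda>s. m * (s + c)) has_real_derivative m) (at s)"
      by (auto intro!: derivative_eq_intros)
    then have "(\<mu> has_real_derivative m) (at s)"
      by (rule has_field_derivative_transform_within_open[OF _ I(1) s]) (simp add: \<mu>)
    then show ?thesis using \<mu>'[OF s] DERIV_unique by blast
  qed
  have "\<exists>C. \<forall>s\<in>I. (\<nu> s)\<^sup>2 + m\<^sup>2 * (s\<^sup>2 + 2 * c * s) = C"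
  proof (rule has_field_derivative_zero_constant[OF is_interval_convex[OF I(2)]])
    fix s assume s: "s \<in> I"
    have "((\<lambda>s. (\<nu> s)\<^sup>2 + m\<^sup>2 * (s\<^sup>2 + 2 * c * s)) has_real_derivative
        2 * \<nu> s * (- k3 s * \<mu> s) + m\<^sup>2 * (2 * s + 2 * c)) (at s)"
      using \<nu>'[OF s] by (auto intro!: derivative_eq_intros)
    moreover have "2 * \<nu> s * (- k3 s * \<mu> s) + m\<^sup>2 * (2 * s + 2 * c) =
        2 * (m - k3 s * \<nu> s) * m * (s + c)"
      using \<mu>[OF s] by (simp add: power2_eq_square algebra_simps)
    then have "2 * \<nu> s * (- k3 s * \<mu> s) + m\<^sup>2 * (2 * s + 2 * c) = 0"
      using k3\<nu>[OF s] by simp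
    ultimately show "((\<lambda>s. (\<nu> s)\<^sup>2 + m\<^sup>2 * (s\<^sup>2 + 2 * c * s)) has_real_derivative 0) (at s within I)"
      by (simp add: has_field_derivative_at_within)
  qed
  then obtain C where C: "\<And>s. s \<in> I \<Longrightarrow> (\<nu> s)\<^sup>2 + m\<^sup>2 * (s\<^sup>2 + 2 * c * s) = C" by blast
  have "(k3 s)\<^sup>2 * (C / m\<^sup>2 - 2 * c * s - s\<^sup>2) = 1" if s: "s \<in> I" for s
  proof -
    have "(k3 s)\<^sup>2 * (C / m\<^sup>2 - 2 * c * s - s\<^sup>2) = (k3 s * \<nu> s)\<^sup>2 / m\<^sup>2"
      unfolding C[OF s, symmetric] using \<open>m \<noteq> 0\<close> by (simp add: field_simps power2_eq_square)
    then show ?thesis using k3\<nu>[OF s] \<open>m \<noteq> 0\<close> by simp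
  qed
  then show thesis by (rule that)
qed

lemma rectifying_odeI_const_k1_k2:
  assumes k1: "\<forall>s\<in>I. k1 s = \<kappa>1" and k2: "\<forall>s\<in>I. k2 s = \<kappa>2" and "\<kappa>2 \<noteq> 0"
    and \<sigma>: "\<sigma> = 1 \<or> \<sigma> = -1"
    and k3: "\<forall>s\<in>I. c1 - 2 * c * s - s\<^sup>2 > 0 \<and> k3 s = \<sigma> / sqrt (c1 - 2 * c * s - s\<^sup>2)"
  shows "rectifying_ode I k1 k2 k3"
proof -
  define D where "D s = c1 - 2 * c * s - s\<^sup>2" for s
  define m where "m = \<kappa>1 / \<kappa>2"
  define \<nu> where "\<nu> s = m * \<sigma> * sqrt (D s)" for s
  show ?thesis
  proof (rule rectifying_odeI[where \<mu> = "\<lambda>s. m * (s + c)" and \<nu> = \<nu> and c = c])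
    fix s assume s: "s \<in> I"
    have "D s > 0" and k3s: "k3 s = \<sigma> / sqrt (D s)" using k3 s by (auto simp: D_def)
    then have "sqrt (D s) > 0" by simp
    have "k3 s * \<nu> s = m * (\<sigma> * \<sigma>) * (sqrt (D s) / sqrt (D s))"
      unfolding k3s \<nu>_def by simp
    also have "\<dots> = m" using \<sigma> \<open>sqrt (D s) > 0\<close> by auto
    finally show "((\<lambda>s. m * (s + c)) has_real_derivative k3 s * \<nu> s) (at s)"
      by (auto intro!: derivative_eq_intros)
    have D': "(D has_real_derivative - 2 * c - 2 * s) (at s)"
      unfolding D_def[abs_def] by (auto intro!: derivative_eq_intros)
    have "(\<nu> has_real_derivative m * \<sigma> * (inverse (sqrt (D s)) / 2 * (- 2 * c - 2 * s))) (at s)"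
      unfolding \<nu>_def[abs_def]
      by (intro DERIV_cmult DERIV_chain2[OF DERIV_real_sqrt[OF \<open>D s > 0\<close>] D'])
    moreover have "m * \<sigma> * (inverse (sqrt (D s)) / 2 * (- 2 * c - 2 * s)) = - k3 s * (m * (s + c))"
      unfolding k3s by (simp add: divide_simps) (simp add: algebra_simps)
    ultimately show "(\<nu> has_real_derivative - k3 s * (m * (s + c))) (at s)" by simp
    show "k2 s * (m * (s + c)) = k1 s * (s + c)"
      using k1 k2 s \<open>\<kappa>2 \<noteq> 0\<close> by (simp add: m_def)
  qed
qed

lemma rectifying_ode_const_k1_k2_iff:
  assumes I: "open I" "is_interval I"
    and k1: "\<forall>s\<in>I. k1 s = \<kappa>1" and k2: "\<forall>s\<in>I. k2 s = \<kappa>2" and "\<kappa>1 \<noteq> 0" "\<kappa>2 \<noteq> 0"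
    and k3: "continuous_on I k3"
  shows "rectifying_ode I k1 k2 k3 \<longleftrightarrow> (\<exists>c c1 \<sigma>. (\<sigma> = 1 \<or> \<sigma> = -1) \<and>
           (\<forall>s\<in>I. c1 - 2 * c * s - s\<^sup>2 > 0 \<and> k3 s = \<sigma> / sqrt (c1 - 2 * c * s - s\<^sup>2)))"
proof
  assume "rectifying_ode I k1 k2 k3"
  then obtain c c1 where first_integral: "\<And>s. s \<in> I \<Longrightarrow> (k3 s)\<^sup>2 * (c1 - 2 * c * s - s\<^sup>2) = 1"
    using rectifying_ode_const_k1_k2_first_integral[OF I k1 k2 assms(5,6)] by blast
  then have k3_nz: "\<forall>s\<in>I. k3 s \<noteq> 0" by fastforce
  then obtain \<sigma> where \<sigma>: "\<sigma> = 1 \<or> \<sigma> = -1" "\<forall>s\<in>I. k3 s = \<sigma> * \<bar>k3 s\<bar>"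
    using continuous_nonvanishing_sign_constant[OF I(2) k3] by blast
  have "c1 - 2 * c * s - s\<^sup>2 > 0 \<and> k3 s = \<sigma> / sqrt (c1 - 2 * c * s - s\<^sup>2)" if s: "s \<in> I" for s
  proof -
    have D: "c1 - 2 * c * s - s\<^sup>2 = 1 / (k3 s)\<^sup>2"
      using first_integral[OF s] k3_nz s by (simp add: field_simps)
    then have "sqrt (c1 - 2 * c * s - s\<^sup>2) = 1 / \<bar>k3 s\<bar>" by (simp add: real_sqrt_divide)
    then show ?thesis using D \<sigma>(2) s k3_nz by simp
  qed
  then show "\<exists>c c1 \<sigma>. (\<sigma> = 1 \<or> \<sigma> = -1) \<and>
      (\<forall>s\<in>I. c1 - 2 * c * s - s\<^sup>2 > 0 \<and> k3 s = \<sigma> / sqrt (c1 - 2 * c * s - s\<^sup>2))"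
    using \<sigma>(1) by blast
qed (use rectifying_odeI_const_k1_k2[OF k1 k2 \<open>\<kappa>2 \<noteq> 0\<close>] in blast)

lemma rectifying_odeI_const_k2_k3:
  assumes I: "open I" and k2: "\<forall>s\<in>I. k2 s = \<kappa>2" and k3: "\<forall>s\<in>I. k3 s = \<kappa>3" and "\<kappa>2 \<noteq> 0"
    and k1: "continuous_on I k1"
    and k1_eq: "\<forall>s\<in>I. s + c \<noteq> 0 \<longrightarrow> k1 s = c1 * sin (\<kappa>3 * s + c2) / (s + c)"
  shows "rectifying_ode I k1 k2 k3"
proof -
  have k1_mult: "k1 s * (s + c) - c1 * sin (\<kappa>3 * s + c2) = 0" if s: "s \<in> I" for s
  proof (cases "s + c = 0")
    case True
    show ?thesis
    proof (rule continuous_on_zero_off_point[OF I _ s])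
      show "continuous_on I (\<lambda>s. k1 s * (s + c) - c1 * sin (\<kappa>3 * s + c2))"
        by (intro continuous_intros k1)
    qed (use k1_eq True in auto)
  qed (use k1_eq s in simp)
  define m where "m = c1 / \<kappa>2"
  show ?thesis
  proof (rule rectifying_odeI[where \<mu> = "\<lambda>s. m * sin (\<kappa>3 * s + c2)"
        and \<nu> = "\<lambda>s. m * cos (\<kappa>3 * s + c2)" and c = c])
    fix s assume s: "s \<in> I"
    then show "((\<lambda>s. m * sin (\<kappa>3 * s + c2)) has_real_derivative k3 s * (m * cos (\<kappa>3 * s + c2))) (at s)"
      and "((\<lambda>s. m * cos (\<kappa>3 * s + c2)) has_real_derivative - k3 s * (m * sin (\<kappa>3 * s + c2))) (at s)"
      using k3 by (auto intro!: derivative_eq_intros)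
    show "k2 s * (m * sin (\<kappa>3 * s + c2)) = k1 s * (s + c)"
      using k1_mult[OF s] k2 s \<open>\<kappa>2 \<noteq> 0\<close> by (simp add: m_def)
  qed
qed

lemma rectifying_ode_const_k2_k3_iff:
  assumes I: "open I" "is_interval I" "I \<noteq> {}"
    and k2: "\<forall>s\<in>I. k2 s = \<kappa>2" and k3: "\<forall>s\<in>I. k3 s = \<kappa>3" and "\<kappa>2 \<noteq> 0"
    and k1: "continuous_on I k1" "\<forall>s\<in>I. k1 s \<noteq> 0"
  shows "rectifying_ode I k1 k2 k3 \<longleftrightarrow> (\<exists>c c1 c2. c1 \<noteq> 0 \<and>
           (\<forall>s\<in>I. s + c \<noteq> 0 \<longrightarrow> k1 s = c1 * sin (\<kappa>3 * s + c2) / (s + c)))"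
proof
  assume "rectifying_ode I k1 k2 k3"
  then obtain \<mu> \<nu> c where \<mu>': "\<And>s. s \<in> I \<Longrightarrow> (\<mu> has_real_derivative k3 s * \<nu> s) (at s)"
    and \<nu>': "\<And>s. s \<in> I \<Longrightarrow> (\<nu> has_real_derivative - k3 s * \<mu> s) (at s)"
    and rel: "\<And>s. s \<in> I \<Longrightarrow> k2 s * \<mu> s = k1 s * (s + c)"
    unfolding rectifying_ode_def by blast
  obtain A t where \<mu>: "\<And>s. s \<in> I \<Longrightarrow> \<mu> s = A * sin (\<kappa>3 * s + t)"
    using harmonic_system_solution[OF is_interval_convex[OF I(2)], of \<mu> \<kappa>3 \<nu>] \<mu>' \<nu>' k3 by auto
  have k1_eq: "k1 s * (s + c) = \<kappa>2 * A * sin (\<kappa>3 * s + t)" if "s \<in> I" for s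
    using rel[OF that] \<mu>[OF that] k2 that by simp
  obtain s1 where "s1 \<in> I" "s1 \<noteq> - c" using open_nonempty_obtains_other[OF I(1,3)] by blast
  then have "\<kappa>2 * A \<noteq> 0" using k1_eq[of s1] k1(2) by auto
  moreover have "k1 s = \<kappa>2 * A * sin (\<kappa>3 * s + t) / (s + c)" if "s \<in> I" "s + c \<noteq> 0" for s
    using k1_eq[OF that(1)] that(2) by (simp add: field_simps)
  ultimately show "\<exists>c c1 c2. c1 \<noteq> 0 \<and>
      (\<forall>s\<in>I. s + c \<noteq> 0 \<longrightarrow> k1 s = c1 * sin (\<kappa>3 * s + c2) / (s + c))"
    by blast
qed (use rectifying_odeI_const_k2_k3[OF I(1) k2 k3 \<open>\<kappa>2 \<noteq> 0\<close> k1(1)] in blast)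

lemma rectifying_odeI_const_k1_k3:
  assumes I: "open I" and k1: "\<forall>s\<in>I. k1 s = \<kappa>1" and k3: "\<forall>s\<in>I. k3 s = \<kappa>3" and "c2 \<noteq> 0"
    and k2: "continuous_on I k2" "\<forall>s\<in>I. k2 s \<noteq> 0"
    and k2_eq: "\<forall>s\<in>I. s + c \<noteq> 0 \<longrightarrow> k2 s = c2 * (s + c) * (1 / cos (\<kappa>3 * s + c1))"
  shows "rectifying_ode I k1 k2 k3"
proof -
  have k2_mult: "k2 s * cos (\<kappa>3 * s + c1) - c2 * (s + c) = 0" if s: "s \<in> I" "s + c \<noteq> 0" for s
  proof -
    \<comment> \<open>otherwise the junk value \<open>1 / 0 = 0\<close> would give \<open>k2 s = 0\<close>\<close>
    have "cos (\<kappa>3 * s + c1) \<noteq> 0" using k2_eq k2(2) s by auto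
    then show ?thesis using k2_eq s by simp
  qed
  have k2_mult: "k2 s * cos (\<kappa>3 * s + c1) - c2 * (s + c) = 0" if s: "s \<in> I" for s
  proof (cases "s + c = 0")
    case True
    show ?thesis
    proof (rule continuous_on_zero_off_point[OF I _ s])
      show "continuous_on I (\<lambda>s. k2 s * cos (\<kappa>3 * s + c1) - c2 * (s + c))"
        by (intro continuous_intros k2(1))
    qed (use k2_mult True in auto)
  qed (use k2_mult s in simp)
  define m where "m = \<kappa>1 / c2"
  show ?thesis
  proof (rule rectifying_odeI[where \<mu> = "\<lambda>s. m * cos (\<kappa>3 * s + c1)"
        and \<nu> = "\<lambda>s. - m * sin (\<kappa>3 * s + c1)" and c = c])
    fix s assume s: "s \<in> I"
    then show "((\<lambda>s. m * cos (\<kappa>3 * s + c1)) has_real_derivative k3 s * (- m * sin (\<kappa>3 * s + c1))) (at s)"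
      and "((\<lambda>s. - m * sin (\<kappa>3 * s + c1)) has_real_derivative - k3 s * (m * cos (\<kappa>3 * s + c1))) (at s)"
      using k3 by (auto intro!: derivative_eq_intros)
    show "k2 s * (m * cos (\<kappa>3 * s + c1)) = k1 s * (s + c)"
      using k2_mult[OF s] k1 s \<open>c2 \<noteq> 0\<close> by (simp add: m_def field_simps)
  qed
qed

lemma rectifying_ode_const_k1_k3_iff:
  assumes I: "open I" "is_interval I" "I \<noteq> {}"
    and k1: "\<forall>s\<in>I. k1 s = \<kappa>1" and k3: "\<forall>s\<in>I. k3 s = \<kappa>3" and "\<kappa>1 \<noteq> 0"
    and k2: "continuous_on I k2" "\<forall>s\<in>I. k2 s \<noteq> 0"
  shows "rectifying_ode I k1 k2 k3 \<longleftrightarrow> (\<exists>c c1 c2. c2 \<noteq> 0 \<and>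
           (\<forall>s\<in>I. s + c \<noteq> 0 \<longrightarrow> k2 s = c2 * (s + c) * (1 / cos (\<kappa>3 * s + c1))))"
proof
  assume "rectifying_ode I k1 k2 k3"
  then obtain \<mu> \<nu> c where \<mu>': "\<And>s. s \<in> I \<Longrightarrow> (\<mu> has_real_derivative k3 s * \<nu> s) (at s)"
    and \<nu>': "\<And>s. s \<in> I \<Longrightarrow> (\<nu> has_real_derivative - k3 s * \<mu> s) (at s)"
    and rel: "\<And>s. s \<in> I \<Longrightarrow> k2 s * \<mu> s = k1 s * (s + c)"
    unfolding rectifying_ode_def by blast
  obtain A t where "\<And>s. s \<in> I \<Longrightarrow> \<mu> s = A * sin (\<kappa>3 * s + t)"
    using harmonic_system_solution[OF is_interval_convex[OF I(2)], of \<mu> \<kappa>3 \<nu>] \<mu>' \<nu>' k3 by auto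
  then have \<mu>: "\<mu> s = A * cos (\<kappa>3 * s + (t - pi / 2))" if "s \<in> I" for s
    using that by (simp add: add_diff_eq cos_diff)
  have k2_eq: "k2 s * (A * cos (\<kappa>3 * s + (t - pi / 2))) = \<kappa>1 * (s + c)" if "s \<in> I" for s
    using rel[OF that] \<mu>[OF that] k1 that by simp
  obtain s1 where "s1 \<in> I" "s1 \<noteq> - c" using open_nonempty_obtains_other[OF I(1,3)] by blast
  then have "A \<noteq> 0" using k2_eq[of s1] \<open>\<kappa>1 \<noteq> 0\<close> by auto
  have "k2 s = \<kappa>1 / A * (s + c) * (1 / cos (\<kappa>3 * s + (t - pi / 2)))"
    if "s \<in> I" "s + c \<noteq> 0" for s
  proof -
    have "cos (\<kappa>3 * s + (t - pi / 2)) \<noteq> 0"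
      using k2_eq[OF that(1)] that(2) \<open>\<kappa>1 \<noteq> 0\<close> by auto
    then show ?thesis using k2_eq[OF that(1)] \<open>A \<noteq> 0\<close> by (simp add: field_simps)
  qed
  moreover have "\<kappa>1 / A \<noteq> 0" using \<open>A \<noteq> 0\<close> \<open>\<kappa>1 \<noteq> 0\<close> by simp
  ultimately show "\<exists>c c1 c2. c2 \<noteq> 0 \<and>
      (\<forall>s\<in>I. s + c \<noteq> 0 \<longrightarrow> k2 s = c2 * (s + c) * (1 / cos (\<kappa>3 * s + c1)))"
    by blast
qed (use rectifying_odeI_const_k1_k3[OF I(1) k1 k3 _ k2] in blast)

theorem theorem3p3:
  fixes I :: "real set" and \<alpha> T N B1 B2 :: "real \<Rightarrow> real^4" and k1 k2 k3 :: "real \<Rightarrow> real"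
  assumes I: "open I" "is_interval I" "I \<noteq> {}"
    and frenet: "frenet_curve_E4 I \<alpha> T N B1 B2 k1 k2 k3"
    and smooth: "continuous_on I k1" "continuous_on I k2" "continuous_on I k3"
    and nonzero: "\<exists>s\<in>I. k1 s \<noteq> 0" "\<exists>s\<in>I. k2 s \<noteq> 0" "\<exists>s\<in>I. k3 s \<noteq> 0"
    and two_const:
      "((\<exists>a. \<forall>s\<in>I. k1 s = a) \<and> (\<exists>b. \<forall>s\<in>I. k2 s = b)) \<or>
       ((\<exists>b. \<forall>s\<in>I. k2 s = b) \<and> (\<exists>d. \<forall>s\<in>I. k3 s = d)) \<or>
       ((\<exists>a. \<forall>s\<in>I. k1 s = a) \<and> (\<exists>d. \<forall>s\<in>I. k3 s = d))"
  shows "congruent_to_rectifying I \<alpha> \<longleftrightarrow>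
     (\<exists>\<kappa>1 \<kappa>2 c c1 \<sigma>. \<kappa>1 > 0 \<and> \<kappa>2 > 0 \<and> (\<sigma> = 1 \<or> \<sigma> = -1) \<and>
        (\<forall>s\<in>I. k1 s = \<kappa>1 \<and> k2 s = \<kappa>2 \<and> c1 - 2 * c * s - s^2 > 0 \<and>
                 k3 s = \<sigma> / sqrt (c1 - 2 * c * s - s^2))) \<or>
     (\<exists>\<kappa>2 \<kappa>3 c c1 c2. \<kappa>2 > 0 \<and> \<kappa>3 \<noteq> 0 \<and> c1 \<noteq> 0 \<and>
        (\<forall>s\<in>I. k2 s = \<kappa>2 \<and> k3 s = \<kappa>3 \<and>
                 (s + c \<noteq> 0 \<longrightarrow> k1 s = c1 * sin (\<kappa>3 * s + c2) / (s + c)))) \<or>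
     (\<exists>\<kappa>1 \<kappa>3 c c1 c2. \<kappa>1 > 0 \<and> \<kappa>3 \<noteq> 0 \<and> c2 \<noteq> 0 \<and>
        (\<forall>s\<in>I. k1 s = \<kappa>1 \<and> k3 s = \<kappa>3 \<and>
                 (s + c \<noteq> 0 \<longrightarrow> k2 s = c2 * (s + c) * (1 / cos (\<kappa>3 * s + c1)))))"
    (is "_ \<longleftrightarrow> ?R")
proof -
  have pos: "\<forall>s\<in>I. k1 s > 0" "\<forall>s\<in>I. k2 s > 0"
    using frenet_curve_E4_at[OF frenet] by blast+
  then have nz: "\<forall>s\<in>I. k1 s \<noteq> 0" "\<forall>s\<in>I. k2 s \<noteq> 0" by auto
  have const_pos: "\<kappa> > 0" if "\<forall>s\<in>I. k s = \<kappa>" "\<forall>s\<in>I. k s > 0" for k \<kappa>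
    using that I(3) by force
  note case12 = rectifying_ode_const_k1_k2_iff[OF I(1,2) _ _ _ _ smooth(3)]
  note case23 = rectifying_ode_const_k2_k3_iff[OF I _ _ _ smooth(1)]
  note case13 = rectifying_ode_const_k1_k3_iff[OF I _ _ _ smooth(2)]
  have "rectifying_ode I k1 k2 k3 \<longleftrightarrow> ?R"
  proof
    assume ode: "rectifying_ode I k1 k2 k3"
    have k3_nz: "d \<noteq> 0" if "\<forall>s\<in>I. k3 s = d" for d using that nonzero(3) by force
    from two_const show ?R
    proof (elim disjE conjE exE)
      fix a b assume k1: "\<forall>s\<in>I. k1 s = a" and k2: "\<forall>s\<in>I. k2 s = b"
      have "a > 0" "b > 0" using const_pos[OF k1 pos(1)] const_pos[OF k2 pos(2)] .
      then obtain c c1 \<sigma> where sol: "\<sigma> = 1 \<or> \<sigma> = -1"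
        "\<forall>s\<in>I. c1 - 2 * c * s - s\<^sup>2 > 0 \<and> k3 s = \<sigma> / sqrt (c1 - 2 * c * s - s\<^sup>2)"
        using case12[OF k1 k2] ode by auto
      show ?R by (rule disjI1) (use sol k1 k2 \<open>a > 0\<close> \<open>b > 0\<close> in blast)
    next
      fix b d assume k2: "\<forall>s\<in>I. k2 s = b" and k3: "\<forall>s\<in>I. k3 s = d"
      have "b > 0" "d \<noteq> 0" using const_pos[OF k2 pos(2)] k3_nz[OF k3] .
      then obtain c c1 c2 where sol: "c1 \<noteq> 0"
        "\<forall>s\<in>I. s + c \<noteq> 0 \<longrightarrow> k1 s = c1 * sin (d * s + c2) / (s + c)"
        using case23[OF k2 k3] ode nz by auto
      show ?R by (rule disjI2[OF disjI1]) (use sol k2 k3 \<open>b > 0\<close> \<open>d \<noteq> 0\<close> in blast)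
    next
      fix a d assume k1: "\<forall>s\<in>I. k1 s = a" and k3: "\<forall>s\<in>I. k3 s = d"
      have "a > 0" "d \<noteq> 0" using const_pos[OF k1 pos(1)] k3_nz[OF k3] .
      then obtain c c1 c2 where sol: "c2 \<noteq> 0"
        "\<forall>s\<in>I. s + c \<noteq> 0 \<longrightarrow> k2 s = c2 * (s + c) * (1 / cos (d * s + c1))"
        using case13[OF k1 k3] ode nz by auto
      show ?R by (rule disjI2[OF disjI2]) (use sol k1 k3 \<open>a > 0\<close> \<open>d \<noteq> 0\<close> in blast)
    qed
  next
    assume ?R
    then show "rectifying_ode I k1 k2 k3"
      apply (elim disjE exE)
      subgoal for \<kappa>1 \<kappa>2 by (subst case12[of k1 \<kappa>1 k2 \<kappa>2]) fastforce+
      subgoal for \<kappa>2 \<kappa>3 by (subst case23[of k2 \<kappa>2 k3 \<kappa>3]) (use nz in fastforce)+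
      subgoal for \<kappa>1 \<kappa>3 by (subst case13[of k1 \<kappa>1 k3 \<kappa>3]) (use nz in fastforce)+
      done
  qed
  then show ?thesis using congruent_to_rectifying_iff_rectifying_ode[OF frenet I(1,2)] by simp
qed

end
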